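(* For every rational number $\ell > 1$ there exists an integer $N(\ell)$ such that for every integer $m > N(\ell)$ for which $\ell \cdot m$ is an integer, the complete bipartite graph $K_{m,\ell\cdot m}$ is not stable, i.e., its independence polynomial has a root $z$ with $\mathrm{Re}(z) > 0$.
   Context: For a simple graph $G$, the independence polynomial is $i(G,x)=\sum_{k=0}^{\alpha(G)} i_k(G)x^k$, where $i_k(G)$ is the number of independent sets of size $k$ in $G$ (with $i_0(G)=1$) and $\alpha(G)$ is the independence number. A graph $G$ is called stable if every root $z$ of $i(G,x)$ satisfies $\mathrm{Re}(z)\leq 0$. $K_{a,b}$ denotes the complete bipartite graph with parts of sizes $a$ and $b$; its independence polynomial is $(1+x)^a+(1+x)^b-1$. *)

theory Defs
  imports Complex_Main
begin

definition independent_set :: "'a set \<Rightarrow> ('a \<Rightarrow> 'a \<Rightarrow> bool) \<Rightarrow> 'a set \<Rightarrow> bool" where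
  "independent_set V E S \<longleftrightarrow> S \<subseteq> V \<and> (\<forall>u\<in>S. \<forall>v\<in>S. \<not> E u v)"

definition indep_count :: "'a set \<Rightarrow> ('a \<Rightarrow> 'a \<Rightarrow> bool) \<Rightarrow> nat \<Rightarrow> nat" where
  "indep_count V E k = card {S. independent_set V E S \<and> card S = k}"

text \<open>Independence polynomial i(G,x) = sum over k of i_k(G) x^k, evaluated at
a complex number (the sum up to card V covers all k up to alpha(G)).\<close>
definition indep_poly :: "'a set \<Rightarrow> ('a \<Rightarrow> 'a \<Rightarrow> bool) \<Rightarrow> complex \<Rightarrow> complex" where
  "indep_poly V E x = (\<Sum>k\<le>card V. of_nat (indep_count V E k) * x ^ k)"

definition stable_graph :: "'a set \<Rightarrow> ('a \<Rightarrow> 'a \<Rightarrow> bool) \<Rightarrow> bool" where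
  "stable_graph V E \<longleftrightarrow> (\<forall>z. indep_poly V E z = 0 \<longrightarrow> Re z \<le> 0)"

definition Kbip_V :: "nat \<Rightarrow> nat \<Rightarrow> (nat + nat) set" where
  "Kbip_V a b = Inl ` {..<a} \<union> Inr ` {..<b}"

definition Kbip_E :: "(nat + nat) \<Rightarrow> (nat + nat) \<Rightarrow> bool" where
  "Kbip_E u v \<longleftrightarrow> (isl u \<and> \<not> isl v) \<or> (\<not> isl u \<and> isl v)"

end

theory Submission
  imports Defs "HOL-Computational_Algebra.Fundamental_Theorem_Algebra"
begin

text \<open>The independence polynomial of \<open>K\<^sub>a\<^sub>,\<^sub>b\<close> is \<open>(1 + x)^a + (1 + x)^b - 1\<close>.
Writing \<open>l = p / q\<close> in lowest terms, \<open>l m\<close> is an integer only for \<open>m = q k\<close>, and then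
\<open>x = w - 1\<close> is a root whenever \<open>w\<^sup>k\<close> is a root of the trinomial \<open>u\<^sup>q + u\<^sup>p - 1\<close>.
That trinomial has a real root in \<open>(0, 1)\<close> while the product of all its roots has modulus 1,
so it also has a root \<open>u\<close> with \<open>|u| > 1\<close>. The principal \<open>k\<close>-th roots of \<open>u\<close> tend to 1
with real part \<open>1 + ln |u| / k + O(1 / k\<^sup>2)\<close>, so for large \<open>k\<close> one of them has real part
greater than 1, which gives a root \<open>x\<close> with \<open>Re x > 0\<close>.\<close>

lemma sum_choose_power_atMost:
  fixes z :: "'a::comm_semiring_1"
  assumes "n \<le> M"
  shows "(\<Sum>k\<le>M. of_nat (n choose k) * z ^ k) = (1 + z) ^ n"
proof -
  have "(\<Sum>k\<le>M. of_nat (n choose k) * z ^ k) = (\<Sum>k\<le>n. of_nat (n choose k) * z ^ k)"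
    using assms by (intro sum.mono_neutral_right) (auto simp: binomial_eq_0)
  also have "\<dots> = (z + 1) ^ n"
    by (simp add: binomial_ring)
  finally show ?thesis
    by (simp add: add.commute)
qed

lemma independent_set_Kbip_iff:
  "independent_set (Kbip_V a b) Kbip_E S \<longleftrightarrow> S \<subseteq> Inl ` {..<a} \<or> S \<subseteq> Inr ` {..<b}"
proof
  assume indep: "independent_set (Kbip_V a b) Kbip_E S"
  show "S \<subseteq> Inl ` {..<a} \<or> S \<subseteq> Inr ` {..<b}"
  proof (rule ccontr)
    assume "\<not> ?thesis"
    then obtain u v where "u \<in> S" "u \<notin> Inl ` {..<a}" "v \<in> S" "v \<notin> Inr ` {..<b}"
      by blast
    with indep have "u \<in> Inr ` {..<b}" "v \<in> Inl ` {..<a}"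
      unfolding independent_set_def Kbip_V_def by auto
    then have "Kbip_E u v"
      unfolding Kbip_E_def by auto
    with indep \<open>u \<in> S\<close> \<open>v \<in> S\<close> show False
      unfolding independent_set_def by blast
  qed
qed (auto simp: independent_set_def Kbip_V_def Kbip_E_def)

lemma indep_count_Kbip:
  "indep_count (Kbip_V a b) Kbip_E k + (0 choose k) = (a choose k) + (b choose k)"
proof -
  let ?L = "Inl ` {..<a} :: (nat + nat) set" and ?R = "Inr ` {..<b} :: (nat + nat) set"
  let ?subsets = "\<lambda>A :: (nat + nat) set. {S. S \<subseteq> A \<and> card S = k}"
  have indep_sets: "{S. independent_set (Kbip_V a b) Kbip_E S \<and> card S = k} =
      ?subsets ?L \<union> ?subsets ?R"
    by (auto simp: independent_set_Kbip_iff)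
  have "?L \<inter> ?R = {}"
    by auto
  then have disjoint: "?subsets ?L \<inter> ?subsets ?R = ?subsets {}"
    by (auto simp flip: Int_subset_iff)
  have finite_subsets: "finite (?subsets A)" if "finite A" for A
    using that by (auto intro: finite_subset[of _ "Pow A"])
  have "indep_count (Kbip_V a b) Kbip_E k + card (?subsets {}) =
      card (?subsets ?L) + card (?subsets ?R)"
    unfolding indep_count_def indep_sets disjoint[symmetric]
    by (rule card_Un_Int[symmetric]) (simp_all add: finite_subsets)
  also have "\<dots> = (a choose k) + (b choose k)"
    by (simp add: n_subsets card_image)
  finally show ?thesis
    by (simp only: n_subsets[OF finite.emptyI] card.empty)
qed

lemma indep_poly_Kbip:
  "indep_poly (Kbip_V a b) Kbip_E z = (1 + z) ^ a + (1 + z) ^ b - 1"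
proof -
  have card: "card (Kbip_V a b) = a + b"
    unfolding Kbip_V_def by (subst card_Un_disjoint) (auto simp: card_image)
  have "indep_poly (Kbip_V a b) Kbip_E z + (\<Sum>k\<le>a + b. of_nat (0 choose k) * z ^ k) =
      (\<Sum>k\<le>a + b. of_nat (a choose k) * z ^ k) + (\<Sum>k\<le>a + b. of_nat (b choose k) * z ^ k)"
    unfolding indep_poly_def card sum.distrib[symmetric] distrib_right[symmetric]
      of_nat_add[symmetric] indep_count_Kbip ..
  then show ?thesis
    by (simp add: sum_choose_power_atMost eq_diff_eq)
qed

lemma Kbip_not_stable_if_root:
  assumes "(1 + z) ^ a + (1 + z) ^ b = 1" and "Re z > 0"
  shows "\<not> stable_graph (Kbip_V a b) Kbip_E"
  using assms by (auto simp: stable_graph_def indep_poly_Kbip)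

lemma poly_root_norm_gt_1:
  fixes P :: "complex poly"
  assumes monic: "lead_coeff P = 1" and "norm (poly P 0) = 1"
    and "poly P x = 0" and "norm x < 1"
  shows "\<exists>u. poly P u = 0 \<and> norm u > 1"
proof -
  obtain root where "smult (lead_coeff P) (\<Prod>i<degree P. [:-root i, 1:]) = P"
    using complex_poly_decompose' by blast
  then have P_eq: "P = (\<Prod>i<degree P. [:-root i, 1:])"
    using monic by simp
  have poly_P: "poly P u = (\<Prod>i<degree P. u - root i)" for u
    using P_eq[THEN arg_cong, of "\<lambda>Q. poly Q u"] by (simp add: poly_prod)
  obtain i where i: "i < degree P" "root i = x"
    using \<open>poly P x = 0\<close> by (auto simp: poly_P)
  have "(\<Prod>j<degree P. norm (root j)) = 1"
    using \<open>norm (poly P 0) = 1\<close> by (simp add: poly_P prod_norm[symmetric])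
  moreover have "(\<Prod>j<degree P. norm (root j)) < 1" if "\<forall>j<degree P. norm (root j) \<le> 1"
  proof -
    have "(\<Prod>j<degree P. norm (root j)) = norm x * (\<Prod>j\<in>{..<degree P} - {i}. norm (root j))"
      using i by (subst prod.remove[of _ i]) auto
    also have "\<dots> \<le> norm x"
      using that by (intro mult_left_le prod_le_1) auto
    finally show ?thesis
      using \<open>norm x < 1\<close> by simp
  qed
  ultimately obtain j where "j < degree P" "norm (root j) > 1"
    using not_le by fastforce
  then show ?thesis
    by (intro exI[of _ "root j"]) (auto simp: poly_P)
qed

lemma trinomial_root_norm_gt_1:
  assumes "0 < q" and "q < p"
  shows "\<exists>u::complex. u ^ q + u ^ p = 1 \<and> norm u > 1"
proof -
  define P :: "complex poly" where "P = monom 1 p + (monom 1 q - 1)"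
  have poly_P: "poly P u = u ^ p + u ^ q - 1" for u
    unfolding P_def by (simp add: poly_monom)
  have "degree (monom (1::complex) q - 1) \<le> q"
    by (rule order.trans[OF degree_diff_le_max]) (auto simp: degree_monom_le)
  then have "degree P = p"
    unfolding P_def using assms by (subst degree_add_eq_left) (auto simp: degree_monom_eq)
  then have "lead_coeff P = 1"
    unfolding P_def using assms by (simp add: coeff_monom)
  have "\<exists>x\<ge>0. x \<le> 1 \<and> x ^ p + x ^ q - 1 = (0::real)"
    by (rule IVT') (use assms in \<open>auto simp: power_0_left intro!: continuous_intros\<close>)
  then obtain x :: real where "0 \<le> x" "x \<le> 1" and root_x: "x ^ p + x ^ q - 1 = 0"
    by blast
  then have "x < 1"
    by (cases "x = 1") auto
  have "poly P (of_real x) = of_real (x ^ p + x ^ q - 1)"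
    by (simp add: poly_P)
  then have "poly P (of_real x) = 0"
    using root_x by simp
  moreover have "norm (poly P 0) = 1"
    using assms by (simp add: poly_P power_0_left)
  ultimately obtain u where "poly P u = 0" "norm u > 1"
    using poly_root_norm_gt_1[OF \<open>lead_coeff P = 1\<close>] \<open>0 \<le> x\<close> \<open>x < 1\<close> by force
  then show ?thesis
    by (intro exI[of _ u]) (simp add: poly_P algebra_simps)
qed

lemma eventually_root_Re_gt_1:
  fixes u :: complex
  assumes "norm u > 1"
  shows "\<forall>\<^sub>F k in sequentially. \<exists>w. w ^ k = u \<and> Re w > 1"
proof -
  define a where "a = ln (norm u)"
  \<comment> \<open>\<open>g (1 / k)\<close> is the real part of the principal \<open>k\<close>-th root of \<open>u\<close>; \<open>g 0 = 1\<close> and \<open>g' 0 = a > 0\<close>.\<close>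
  define g where "g h = exp (a * h) * cos (Arg u * h)" for h
  have "u \<noteq> 0" and "a > 0"
    using assms by (auto simp: a_def ln_gt_zero)
  have "DERIV g 0 :> a"
    unfolding g_def by (auto intro!: derivative_eq_intros)
  then obtain d where "d > 0" and g_gt_1: "\<And>h. 0 < h \<Longrightarrow> h < d \<Longrightarrow> 1 < g h"
    using DERIV_pos_inc_right[OF _ \<open>a > 0\<close>] by (fastforce simp: g_def)
  obtain K :: nat where "1 / d < K"
    using reals_Archimedean2 by blast
  have "\<exists>w. w ^ k = u \<and> Re w > 1" if "k \<ge> K" for k
  proof -
    have "1 / d < real k"
      using \<open>1 / d < K\<close> that by linarith
    moreover have "0 < 1 / d"
      using \<open>d > 0\<close> by simp
    ultimately have "k > 0"
      by (metis of_nat_0_less_iff order.strict_trans)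
    with \<open>1 / d < real k\<close> have "1 / real k < d"
      using \<open>d > 0\<close> by (simp add: field_simps)
    define w where "w = rcis (exp (a / k)) (Arg u / k)"
    have "w ^ k = rcis (exp (a / k) ^ k) (Arg u)"
      using \<open>k > 0\<close> by (simp add: w_def DeMoivre2)
    also have "exp (a / k) ^ k = norm u"
      using \<open>k > 0\<close> \<open>u \<noteq> 0\<close> by (simp add: a_def flip: exp_of_nat_mult)
    finally have "w ^ k = u"
      by (simp add: rcis_cmod_Arg)
    moreover have "Re w = g (1 / k)"
      by (simp add: w_def g_def)
    ultimately show ?thesis
      using g_gt_1[of "1 / k"] \<open>k > 0\<close> \<open>1 / real k < d\<close> by auto
  qed
  then show ?thesis
    by (rule eventually_sequentiallyI)
qed

lemma quotient_of_mult_in_Ints: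
  assumes "quotient_of l = (a, b)" and "l * of_nat m \<in> \<int>"
  shows "\<exists>k. m = nat b * k \<and> nat \<lfloor>l * of_nat m\<rfloor> = nat a * k"
proof -
  have "b > 0" and "coprime a b" and l: "l = of_int a / of_int b"
    using assms(1) by (simp_all add: quotient_of_denom_pos quotient_of_coprime quotient_of_div)
  obtain t :: int where t: "l * of_nat m = of_int t"
    using assms(2) by (elim Ints_cases)
  then have "of_int (a * int m) = (of_int (b * t) :: rat)"
    using \<open>b > 0\<close> unfolding l by (simp add: field_simps)
  then have "a * int m = b * t"
    by (simp only: of_int_eq_iff)
  then have "b dvd a * int m"
    by simp
  then have "b dvd int m"
    using \<open>coprime a b\<close> by (simp add: coprime_commute coprime_dvd_mult_right_iff)
  then obtain c where c: "int m = b * c"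
    by (elim dvdE)
  then have "0 \<le> b * c"
    by (simp flip: c)
  then have "c \<ge> 0"
    using \<open>b > 0\<close> by (simp add: zero_le_mult_iff)
  have "t = a * c"
    using \<open>a * int m = b * t\<close> \<open>b > 0\<close> unfolding c by (simp add: mult.left_commute)
  show ?thesis
  proof (intro exI conjI)
    show "m = nat b * nat c"
      using c \<open>b > 0\<close> by (metis nat_int nat_mult_distrib less_imp_le)
    show "nat \<lfloor>l * of_nat m\<rfloor> = nat a * nat c"
      using \<open>c \<ge> 0\<close> by (metis t \<open>t = a * c\<close> floor_of_int mult.commute nat_mult_distrib)
  qed
qed

theorem theorem4:
  fixes l :: rat
  assumes "l > 1"
  shows "\<exists>N::int. \<forall>m::nat. int m > N \<longrightarrow> l * of_nat m \<in> \<int> \<longrightarrow>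
           \<not> stable_graph (Kbip_V m (nat \<lfloor>l * of_nat m\<rfloor>)) Kbip_E"
proof -
  obtain a b where ab: "quotient_of l = (a, b)"
    by fastforce
  have "0 < nat b" "nat b < nat a"
    using assms quotient_of_denom_pos[OF ab] quotient_of_div[OF ab] by (auto simp: field_simps)
  then obtain u :: complex where u: "u ^ nat b + u ^ nat a = 1" "norm u > 1"
    using trinomial_root_norm_gt_1 by blast
  obtain K where K: "\<And>k. k \<ge> K \<Longrightarrow> \<exists>w. w ^ k = u \<and> Re w > 1"
    using eventually_root_Re_gt_1[OF u(2)] unfolding eventually_sequentially by blast
  show ?thesis
  proof (intro exI[of _ "int (nat b * K)"] allI impI)
    fix m :: nat
    assume "int m > int (nat b * K)" and "l * of_nat m \<in> \<int>"
    then obtain k where m: "m = nat b * k" and lm: "nat \<lfloor>l * of_nat m\<rfloor> = nat a * k"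
      using quotient_of_mult_in_Ints[OF ab] by blast
    with \<open>int m > int (nat b * K)\<close> have "k \<ge> K"
      by (metis of_nat_less_iff mult_less_cancel1 less_imp_le)
    then obtain w where "w ^ k = u" "Re w > 1"
      using K by blast
    then have "w ^ (nat b * k) = u ^ nat b" "w ^ (nat a * k) = u ^ nat a"
      by (simp_all add: power_mult mult.commute[of _ k])
    then have "(1 + (w - 1)) ^ m + (1 + (w - 1)) ^ nat \<lfloor>l * of_nat m\<rfloor> = 1"
      unfolding lm unfolding m using u by simp
    then show "\<not> stable_graph (Kbip_V m (nat \<lfloor>l * of_nat m\<rfloor>)) Kbip_E"
      by (rule Kbip_not_stable_if_root) (simp add: \<open>Re w > 1\<close>)
  qed
qed

end
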